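(* For a unital commutative semiring $X$, the following are equivalent: (1) $X$ is fully elementary, upper-bound and $2$-cancellative; (2) $X$ is Frobenius and idempotent.
   Context: A semiring $(X,+,0,\cdot)$: $(X,+,0)$ commutative monoid, $(X,\cdot)$ semigroup, distributivity, $0$ absorbing. Unital: has a multiplicative unit $1$; commutative: $\cdot$ commutative; idempotent: $x+x=x$ for all $x$. Intrinsic order: $a\le b$ iff $a+x=b$ for some $x\in X$; $X$ is upper-bound if this preorder is antisymmetric. $X$ is $2$-cancellative if $x+x=y+y$ implies $x=y$. $X$ is Frobenius if $(x+y)^n=x^n+y^n$ for all $x,y\in X$ and all integers $n\ge1$. Polynomials in $n$ variables are functions $X^n\to X$ represented by formal expressions $\sum_{k=1}^m a_k\prod_{j=1}^n x_j^{d_{k,j}}$ ($a_k\in X$). A polynomial is symmetric if represented by an expression which, with each monomial $a_k\prod_j x_j^{d_{k,j}}$, contains all monomials $a_k\prod_j x_{\sigma(j)}^{d_{k,j}}$, $\sigma\in S_n$ (up to reordering factors). $e_j$ ($1\le j\le n$) is the sum of all products of $j$ distinct variables among $x_1,\dots,x_n$. $X$ is $n$-elementary if every symmetric polynomial $p$ in $n$ variables can be written as $p(x_1,\dots,x_n)=r(e_1,\dots,e_n)$ for some polynomial $r$, for all $x_i\in X$; $X$ is fully elementary if it is $n$-elementary for every $n\in\mathbb{N}$. *)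

theory Defs
  imports "HOL-Combinatorics.Permutations" "HOL-Library.Multiset"
begin

text \<open>Unital commutative semirings (possibly trivial, i.e. 0 = 1 allowed) are the
  type class combination {comm_semiring_0, comm_monoid_mult}.\<close>

text \<open>A formal polynomial expression in n variables x_0..x_(n-1) is a list of monomials
  (a, d): coefficient a and exponent vector d (only d j for j < n is relevant).\<close>

type_synonym 'a poly_expr = "('a \<times> (nat \<Rightarrow> nat)) list"

definition poly_eval :: "nat \<Rightarrow> ('a::{comm_semiring_0, comm_monoid_mult}) poly_expr \<Rightarrow> (nat \<Rightarrow> 'a) \<Rightarrow> 'a" where
  "poly_eval n ps x = (\<Sum>(a, d) \<leftarrow> ps. a * (\<Prod>j<n. x j ^ d j))"

definition symmetric_expr :: "nat \<Rightarrow> 'a poly_expr \<Rightarrow> bool" where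
  "symmetric_expr n ps \<longleftrightarrow>
     (\<forall>\<sigma>. \<sigma> permutes {..<n} \<longrightarrow> mset (map (\<lambda>(a, d). (a, d \<circ> \<sigma>)) ps) = mset ps)"

definition elem_sym :: "nat \<Rightarrow> nat \<Rightarrow> (nat \<Rightarrow> 'a::{comm_semiring_0, comm_monoid_mult}) \<Rightarrow> 'a" where
  "elem_sym n k x = (\<Sum>S\<in>{S. S \<subseteq> {..<n} \<and> card S = k}. \<Prod>i\<in>S. x i)"

definition n_elementary :: "'a::{comm_semiring_0, comm_monoid_mult} itself \<Rightarrow> nat \<Rightarrow> bool" where
  "n_elementary _ n \<longleftrightarrow>
     (\<forall>ps :: 'a poly_expr. symmetric_expr n ps \<longrightarrow>
        (\<exists>rs :: 'a poly_expr. \<forall>x :: nat \<Rightarrow> 'a.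
            poly_eval n ps x = poly_eval n rs (\<lambda>j. elem_sym n (Suc j) x)))"

definition fully_elementary :: "'a::{comm_semiring_0, comm_monoid_mult} itself \<Rightarrow> bool" where
  "fully_elementary T \<longleftrightarrow> (\<forall>n. n_elementary T n)"

definition intr_le :: "'a::comm_monoid_add \<Rightarrow> 'a \<Rightarrow> bool" where
  "intr_le a b \<longleftrightarrow> (\<exists>x. a + x = b)"

definition sr_upper_bound :: "'a::comm_monoid_add itself \<Rightarrow> bool" where
  "sr_upper_bound _ \<longleftrightarrow> (\<forall>a b :: 'a. intr_le a b \<and> intr_le b a \<longrightarrow> a = b)"

definition sr_two_cancellative :: "'a::comm_monoid_add itself \<Rightarrow> bool" where
  "sr_two_cancellative _ \<longleftrightarrow> (\<forall>x y :: 'a. x + x = y + y \<longrightarrow> x = y)"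

definition sr_frobenius :: "'a::{comm_semiring_0, comm_monoid_mult} itself \<Rightarrow> bool" where
  "sr_frobenius _ \<longleftrightarrow> (\<forall>(x::'a) y (n::nat). n \<ge> 1 \<longrightarrow> (x + y) ^ n = x ^ n + y ^ n)"

definition sr_idempotent :: "'a::comm_monoid_add itself \<Rightarrow> bool" where
  "sr_idempotent _ \<longleftrightarrow> (\<forall>x :: 'a. x + x = x)"

end

theory Submission
  imports Defs
begin

(*
  (1) ==> (2): the power sum x0^N + x1^N is symmetric, so it equals r(e1, e2) for some polynomial r.
  Evaluating at (x + y, 0) gives (x + y)^N = r(x + y, 0), which lies below r(x + y, xy) = x^N + y^N
  in the intrinsic order, because substituting 0 for a variable can only lower a polynomial. Since
  x^N + y^N <= (x + y)^N holds in every semiring, upper-boundedness yields the Frobenius law; for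
  N = 2 and x = y = 1 it reads 4 = 2, and 2-cancellativity turns this into 1 + 1 = 1.

  (2) ==> (1): with idempotent addition the intrinsic order is a <= b <-> a + b = b, which is
  antisymmetric, and a symmetric polynomial is a linear combination of orbit sums m_d of monomials.
  Let S be the support of d, k = |S| and c the least exponent on S. By the Frobenius law
  e_k^c = sum over |S'| = k of prod_{i in S'} x_i^c, and m_d = e_k^c * m_d' where d' lowers d by c on S:
  the orbit of d occurs among the terms of the product, and every other term is dominated by m_d,
  since moving the extra exponent c onto a variable of larger exponent is justified by the exchange
  inequality x^(c+p) y^q <= x^p y^(c+q) + x^(c+q) y^p (p <= q), which is x^p y^p times
  x^c y^(q-p) <= (x + y)^(c+q-p) = x^(c+q-p) + y^(c+q-p). Induction on the size of the support expresses every m_d through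
  e_1, ..., e_n.
*)

section \<open>The intrinsic order\<close>

lemma sr_idempotentD: "sr_idempotent TYPE('a::comm_monoid_add) \<Longrightarrow> (x::'a) + x = x"
  by (simp add: sr_idempotent_def)

lemma sr_frobeniusD:
  "sr_frobenius TYPE('a::{comm_semiring_0,comm_monoid_mult}) \<Longrightarrow> n \<ge> 1 \<Longrightarrow> ((x::'a) + y) ^ n = x ^ n + y ^ n"
  by (simp add: sr_frobenius_def)

lemma intr_le_refl: "intr_le a a"
  unfolding intr_le_def by (metis add_0_right)

lemma intr_le_0: "intr_le 0 a"
  unfolding intr_le_def by simp

lemma intr_le_trans [trans]: "intr_le a b \<Longrightarrow> intr_le b c \<Longrightarrow> intr_le a c"
  unfolding intr_le_def by (metis add.assoc)

lemma intr_le_add_right: "intr_le a (a + b)"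
  unfolding intr_le_def by blast

lemma intr_le_add_left: "intr_le b (a + b)"
  unfolding intr_le_def by (metis add.commute)

lemma intr_le_add_mono: "intr_le a b \<Longrightarrow> intr_le c d \<Longrightarrow> intr_le (a + c) (b + d)"
  unfolding intr_le_def by (metis add.assoc add.commute)

lemma intr_le_mult_left: "intr_le a b \<Longrightarrow> intr_le (c * a) (c * (b::'a::semiring_0))"
  unfolding intr_le_def by (metis distrib_left)

lemma intr_le_sum_mem: "finite I \<Longrightarrow> i \<in> I \<Longrightarrow> intr_le (f i) (sum f I)"
  by (simp add: sum.remove intr_le_add_right)

lemma idem_intr_le_iff:
  assumes "sr_idempotent TYPE('a::comm_monoid_add)"
  shows "intr_le (a::'a) b \<longleftrightarrow> a + b = b"
  unfolding intr_le_def by (metis add.assoc sr_idempotentD[OF assms])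

lemma idem_intr_le_antisym:
  "sr_idempotent TYPE('a::comm_monoid_add) \<Longrightarrow> intr_le (a::'a) b \<Longrightarrow> intr_le b a \<Longrightarrow> a = b"
  by (metis add.commute idem_intr_le_iff)

lemma idem_sum_const:
  assumes "sr_idempotent TYPE('a::comm_monoid_add)" "finite I" "I \<noteq> {}"
  shows "(\<Sum>i\<in>I. a) = (a::'a)"
  using assms(2,3) by (induction I rule: finite_ne_induct) (simp_all add: sr_idempotentD[OF assms(1)])

lemma idem_sum_permutations_const:
  assumes "sr_idempotent TYPE('a::comm_monoid_add)" "finite S"
  shows "(\<Sum>\<sigma> | \<sigma> permutes S. a) = (a::'a)"
proof (rule idem_sum_const[OF assms(1) finite_permutations[OF assms(2)]])
  show "{\<sigma>. \<sigma> permutes S} \<noteq> {}" using permutes_id by blast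
qed

lemma idem_add_intr_le:
  "sr_idempotent TYPE('a::comm_monoid_add) \<Longrightarrow> intr_le a (c::'a) \<Longrightarrow> intr_le b c \<Longrightarrow> intr_le (a + b) c"
  by (metis intr_le_add_mono sr_idempotentD)

lemma idem_sum_le:
  assumes "sr_idempotent TYPE('a::comm_monoid_add)" "finite I" "\<And>i. i \<in> I \<Longrightarrow> intr_le (f i) (b::'a)"
  shows "intr_le (sum f I) b"
  using assms(2,3)
  by (induction I rule: finite_induct)
     (simp_all add: intr_le_0 idem_add_intr_le[OF assms(1)])

lemma idempotent_upper_bound: "sr_idempotent TYPE('a::comm_monoid_add) \<Longrightarrow> sr_upper_bound TYPE('a)"
  unfolding sr_upper_bound_def using idem_intr_le_antisym by blast

lemma idempotent_two_cancellative: "sr_idempotent TYPE('a::comm_monoid_add) \<Longrightarrow> sr_two_cancellative TYPE('a)"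
  unfolding sr_two_cancellative_def by (simp add: sr_idempotentD)

section \<open>Binomial inequalities\<close>

lemma mult_pow_intr_le_pow_add:
  fixes x y :: "'a::{comm_semiring_0,comm_monoid_mult}"
  shows "intr_le (x ^ c * y ^ m) ((x + y) ^ (c + m))"
proof (induction c)
  case 0
  show ?case
  proof (induction m)
    case (Suc m)
    have "intr_le (y * y ^ m) (y * (x + y) ^ m)" using Suc intr_le_mult_left by simp
    then show ?case by (simp add: distrib_right intr_le_trans[OF _ intr_le_add_left])
  qed (simp add: intr_le_refl)
next
  case (Suc c)
  have "intr_le (x * (x ^ c * y ^ m)) (x * (x + y) ^ (c + m))" using Suc intr_le_mult_left by blast
  then show ?case by (simp add: distrib_right mult.assoc intr_le_trans[OF _ intr_le_add_right])
qed

lemma pow_add_intr_le_pow: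
  fixes x y :: "'a::{comm_semiring_0,comm_monoid_mult}"
  shows "n \<ge> 1 \<Longrightarrow> intr_le (x ^ n + y ^ n) ((x + y) ^ n)"
proof (induction n rule: nat_induct_at_least)
  case base then show ?case by (simp add: intr_le_refl)
next
  case (Suc n)
  then obtain z where z: "x ^ n + y ^ n + z = (x + y) ^ n" unfolding intr_le_def by blast
  have "(x + y) ^ Suc n = x ^ Suc n + y ^ Suc n + (x * y ^ n + y * x ^ n + (x + y) * z)"
    by (simp flip: z add: algebra_simps)
  then show ?case unfolding intr_le_def by metis
qed

lemma frobenius_sum_pow:
  assumes "sr_frobenius TYPE('a::{comm_semiring_0,comm_monoid_mult})" "c \<ge> 1"
  shows "(sum u I :: 'a) ^ c = (\<Sum>i\<in>I. u i ^ c)"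
proof -
  have "(0::'a) ^ c = 0" using assms(2) by (cases c) auto
  then show ?thesis
    by (induction I rule: infinite_finite_induct) (simp_all add: sr_frobeniusD[OF assms])
qed

lemma frobenius_exchange:
  assumes "sr_frobenius TYPE('a::{comm_semiring_0,comm_monoid_mult})" "p \<le> q"
  shows "intr_le ((x::'a) ^ (c + p) * y ^ q) (x ^ p * y ^ (c + q) + x ^ (c + q) * y ^ p)"
proof -
  obtain m where q: "q = p + m" using assms(2) le_Suc_ex by blast
  have "intr_le (x ^ c * y ^ m) (x ^ (c + m) + y ^ (c + m))"
  proof (cases "c + m = 0")
    case True then show ?thesis by (simp add: intr_le_add_right)
  next
    case False
    then have "(x + y) ^ (c + m) = x ^ (c + m) + y ^ (c + m)"
      by (intro sr_frobeniusD[OF assms(1)]) (use False in linarith)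
    then show ?thesis
      using mult_pow_intr_le_pow_add[of x c y m] by simp
  qed
  from intr_le_mult_left[OF this, of "x ^ p * y ^ p"]
  show ?thesis unfolding q by (simp add: power_add algebra_simps)
qed

section \<open>Orbit sums of monomials\<close>

definition monomial :: "nat \<Rightarrow> (nat \<Rightarrow> nat) \<Rightarrow> (nat \<Rightarrow> 'a::comm_monoid_mult) \<Rightarrow> 'a" where
  "monomial n d x = (\<Prod>j<n. x j ^ d j)"

lemma poly_eval_Nil [simp]: "poly_eval n [] y = 0"
  by (simp add: poly_eval_def)

lemma poly_eval_Cons [simp]: "poly_eval n ((a, d) # ps) y = a * monomial n d y + poly_eval n ps y"
  by (simp add: poly_eval_def monomial_def)

lemma poly_eval_append: "poly_eval n (ps @ qs) y = poly_eval n ps y + poly_eval n qs y"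
  by (simp add: poly_eval_def)

lemma poly_eval_monomial: "poly_eval n ps y = (\<Sum>(a, d) \<leftarrow> ps. a * monomial n d y)"
  by (simp add: poly_eval_def monomial_def)

text \<open>The orbit sum of a monomial, with multiplicities; these disappear once addition is idempotent.\<close>

definition sym_monomial ::
    "nat \<Rightarrow> (nat \<Rightarrow> nat) \<Rightarrow> (nat \<Rightarrow> 'a::{comm_semiring_0,comm_monoid_mult}) \<Rightarrow> 'a" where
  "sym_monomial n d x = (\<Sum>\<sigma> | \<sigma> permutes {..<n}. monomial n (d \<circ> \<sigma>) x)"

definition raise_on :: "nat set \<Rightarrow> nat \<Rightarrow> (nat \<Rightarrow> nat) \<Rightarrow> nat \<Rightarrow> nat" where
  "raise_on S c d j = (if j \<in> S then c else 0) + d j"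

lemma raise_on_0 [simp]: "raise_on S 0 d = d"
  by (simp add: fun_eq_iff raise_on_def)

lemma raise_on_comp: "inj \<sigma> \<Longrightarrow> raise_on (\<sigma> ` S) c d \<circ> \<sigma> = raise_on S c (d \<circ> \<sigma>)"
  by (auto simp: fun_eq_iff raise_on_def inj_image_mem_iff)

lemma finite_subsets_card: "finite {S. S \<subseteq> {..<(n::nat)} \<and> card S = k}"
  by (rule finite_subset[of _ "Pow {..<n}"]) auto

lemma prod_power_distrib_comm_monoid:
  "prod f A ^ n = (\<Prod>x\<in>A. f x ^ n)" for f :: "'b \<Rightarrow> 'a::comm_monoid_mult"
  by (induction A rule: infinite_finite_induct) (simp_all add: power_mult_distrib)

lemma frobenius_elem_sym_pow:
  assumes "sr_frobenius TYPE('a::{comm_semiring_0,comm_monoid_mult})" "c \<ge> 1"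
  shows "elem_sym n k (x::nat \<Rightarrow> 'a) ^ c = (\<Sum>S | S \<subseteq> {..<n} \<and> card S = k. \<Prod>i\<in>S. x i ^ c)"
  unfolding elem_sym_def frobenius_sum_pow[OF assms]
  by (simp add: prod_power_distrib_comm_monoid)

lemma prod_pow_mult_monomial:
  assumes "S \<subseteq> {..<n}"
  shows "(\<Prod>i\<in>S. x i ^ c) * monomial n d x = monomial n (raise_on S c d) x"
proof -
  have "(\<Prod>j<n. x j ^ (if j \<in> S then c else 0)) = (\<Prod>j\<in>{..<n} \<inter> S. x j ^ c)"
    by (simp add: prod.inter_restrict if_distrib[of "\<lambda>k. x _ ^ k"] cong: if_cong)
  also have "{..<n} \<inter> S = S" using assms by blast
  finally show ?thesis
    unfolding monomial_def raise_on_def by (simp add: power_add prod.distrib)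
qed

lemma monomial_split2:
  assumes "i < n" "j < n" "i \<noteq> j"
  shows "monomial n e x = x i ^ e i * x j ^ e j * (\<Prod>k\<in>{..<n} - {i} - {j}. x k ^ e k)"
  using assms unfolding monomial_def
  by (simp add: prod.remove[of "{..<n}" i] prod.remove[of "{..<n} - {i}" j] mult.assoc)

lemma monomial_exchange:
  assumes frob: "sr_frobenius TYPE('a::{comm_semiring_0,comm_monoid_mult})"
    and ij: "i < n" "j < n" "i \<noteq> j" and "p \<le> q"
    and e: "e i = c + p" "e j = q" and e': "e' i = p" "e' j = c + q"
    and rest: "\<And>k. k \<noteq> i \<Longrightarrow> k \<noteq> j \<Longrightarrow> e' k = e k"
  shows "intr_le (monomial n e (x::nat \<Rightarrow> 'a)) (monomial n e' x + monomial n (e' \<circ> transpose i j) x)"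
proof -
  define R where "R = (\<Prod>k\<in>{..<n} - {i} - {j}. x k ^ e k)"
  have R: "R = (\<Prod>k\<in>{..<n} - {i} - {j}. x k ^ e' k)"
          "R = (\<Prod>k\<in>{..<n} - {i} - {j}. x k ^ (e' \<circ> transpose i j) k)"
    unfolding R_def by (auto intro!: prod.cong simp: rest)
  have "monomial n e x = R * (x i ^ (c + p) * x j ^ q)"
    by (simp add: monomial_split2[OF ij] e R_def mult_ac)
  moreover have "monomial n e' x + monomial n (e' \<circ> transpose i j) x
      = R * (x i ^ p * x j ^ (c + q) + x i ^ (c + q) * x j ^ p)"
    by (subst (1 2) monomial_split2[OF ij], simp only: R[symmetric])
       (simp add: e' algebra_simps)
  ultimately show ?thesis
    using intr_le_mult_left[OF frobenius_exchange[OF frob \<open>p \<le> q\<close>]] by metis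
qed

lemma monomial_raise_exchange:
  assumes frob: "sr_frobenius TYPE('a::{comm_semiring_0,comm_monoid_mult})"
    and \<sigma>: "\<sigma> permutes {..<n}" and U: "U \<subseteq> {..<n}" "a \<in> U" and b: "b < n" "b \<notin> U"
    and "\<mu> a \<le> \<mu> b"
  defines "U' \<equiv> insert b (U - {a})" and "\<tau> \<equiv> transpose (inv \<sigma> a) (inv \<sigma> b)"
  shows "intr_le (monomial n (raise_on U c \<mu> \<circ> \<sigma>) (x::nat \<Rightarrow> 'a))
      (monomial n (raise_on U' c \<mu> \<circ> \<sigma>) x + monomial n (raise_on U' c \<mu> \<circ> (\<sigma> \<circ> \<tau>)) x)"
proof -
  define i j where "i = inv \<sigma> a" and "j = inv \<sigma> b"
  have ij: "\<sigma> i = a" "\<sigma> j = b" "i < n" "j < n"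
    using permutes_inverses[OF \<sigma>] permutes_in_image[OF permutes_inv[OF \<sigma>]] U b
    unfolding i_def j_def by auto
  have "i \<noteq> j" using ij U b by auto
  show ?thesis
    unfolding \<tau>_def i_def[symmetric] j_def[symmetric] comp_assoc[symmetric]
  proof (rule monomial_exchange[OF frob \<open>i < n\<close> \<open>j < n\<close> \<open>i \<noteq> j\<close> \<open>\<mu> a \<le> \<mu> b\<close>])
    fix k assume "k \<noteq> i" "k \<noteq> j"
    then have "\<sigma> k \<noteq> a" "\<sigma> k \<noteq> b" using ij permutes_inj[OF \<sigma>] by (metis inj_eq)+
    then show "(raise_on U' c \<mu> \<circ> \<sigma>) k = (raise_on U c \<mu> \<circ> \<sigma>) k"
      by (simp add: raise_on_def U'_def)
  qed (use U b ij in \<open>auto simp: raise_on_def U'_def\<close>)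
qed

lemma monomial_raise_le_sym_monomial:
  assumes idem: "sr_idempotent TYPE('a::{comm_semiring_0,comm_monoid_mult})"
    and frob: "sr_frobenius TYPE('a)"
    and T: "T \<subseteq> {..<n}" and dom: "\<And>i j. i \<in> T \<Longrightarrow> j \<in> {..<n} - T \<Longrightarrow> \<mu> j \<le> \<mu> i"
    and "U \<subseteq> {..<n}" "card U = card T" "\<sigma> permutes {..<n}"
  shows "intr_le (monomial n (raise_on U c \<mu> \<circ> \<sigma>) (x::nat \<Rightarrow> 'a)) (sym_monomial n (raise_on T c \<mu>) x)"
  using assms(5-7)
proof (induction "card (U - T)" arbitrary: U \<sigma> rule: less_induct)
  case less
  have finT: "finite T" and finU: "finite U"
    using T less.prems(1) finite_subset by auto
  show ?case
  proof (cases "U \<subseteq> T")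
    case True
    then have "U = T" using card_subset_eq[OF finT] less.prems(2) by blast
    then show ?thesis
      unfolding sym_monomial_def using less.prems(3)
      by (auto intro: intr_le_sum_mem simp: finite_permutations)
  next
    case False
    then obtain a where a: "a \<in> U" "a \<notin> T" by blast
    have "\<not> T \<subseteq> U" using False card_subset_eq[OF finU] less.prems(2) by metis
    then obtain b where b: "b \<in> T" "b \<notin> U" by blast
    define U' where "U' = insert b (U - {a})"
    have "card U > 0" using a finU by (auto simp: card_gt_0_iff)
    then have U': "U' \<subseteq> {..<n}" "card U' = card T"
      using less.prems(1,2) T a b finU by (auto simp: U'_def card_insert_if)
    have "U' - T = U - T - {a}" using a b by (auto simp: U'_def)
    then have smaller: "card (U' - T) < card (U - T)"
      using a finU card_Diff1_less[of "U - T" a] by simp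
    have IH: "intr_le (monomial n (raise_on U' c \<mu> \<circ> \<sigma>') x) (sym_monomial n (raise_on T c \<mu>) x)"
      if "\<sigma>' permutes {..<n}" for \<sigma>'
      using less.hyps[OF smaller U' that] .
    have \<sigma>: "\<sigma> permutes {..<n}" and "a < n" "b < n" using less.prems(1,3) a b T by auto
    then have "\<mu> a \<le> \<mu> b" using dom[of b a] a b by simp
    have "\<sigma> \<circ> transpose (inv \<sigma> a) (inv \<sigma> b) permutes {..<n}"
      using permutes_compose[OF permutes_swap_id \<sigma>] permutes_in_image[OF permutes_inv[OF \<sigma>]]
        \<open>a < n\<close> \<open>b < n\<close> by simp
    then show ?thesis
      using monomial_raise_exchange[OF frob \<sigma> less.prems(1) a(1) \<open>b < n\<close> b(2) \<open>\<mu> a \<le> \<mu> b\<close>, of c x]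
        idem_add_intr_le[OF idem IH[OF \<sigma>]] IH
      unfolding U'_def[symmetric] by (blast intro: intr_le_trans)
  qed
qed

lemma sym_monomial_raise:
  assumes idem: "sr_idempotent TYPE('a::{comm_semiring_0,comm_monoid_mult})"
    and frob: "sr_frobenius TYPE('a)"
    and S: "S \<subseteq> {..<n}" and dom: "\<And>i j. i \<in> S \<Longrightarrow> j \<in> {..<n} - S \<Longrightarrow> \<mu> j \<le> \<mu> i"
  shows "sym_monomial n (raise_on S c \<mu>) (x::nat \<Rightarrow> 'a) = elem_sym n (card S) x ^ c * sym_monomial n \<mu> x"
proof (cases "c = 0")
  case True
  then show ?thesis by simp
next
  case False
  define Sets where "Sets = {S'. S' \<subseteq> {..<n} \<and> card S' = card S}"
  define P where "P = {\<sigma>. \<sigma> permutes {..<n}}"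
  have fin: "finite Sets" "finite P"
    unfolding Sets_def P_def by (simp_all add: finite_subsets_card finite_permutations)
  let ?terms = "\<Sum>S'\<in>Sets. \<Sum>\<sigma>\<in>P. monomial n (raise_on (\<sigma> ` S') c \<mu> \<circ> \<sigma>) x"
  have "c \<ge> 1" using False by simp
  have "elem_sym n (card S) x ^ c * sym_monomial n \<mu> x = ?terms"
    unfolding frobenius_elem_sym_pow[OF frob \<open>c \<ge> 1\<close>] sym_monomial_def sum_product
      Sets_def[symmetric] P_def[symmetric]
    by (intro sum.cong refl)
       (auto simp: Sets_def P_def prod_pow_mult_monomial raise_on_comp permutes_inj)
  moreover have "intr_le ?terms (sym_monomial n (raise_on S c \<mu>) x)"
  proof (intro idem_sum_le[OF idem] fin)
    fix S' \<sigma> assume "S' \<in> Sets" "\<sigma> \<in> P"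
    then have \<sigma>: "\<sigma> permutes {..<n}" and S': "S' \<subseteq> {..<n}" "card S' = card S"
      by (simp_all add: Sets_def P_def)
    then have img: "\<sigma> ` S' \<subseteq> {..<n}" "card (\<sigma> ` S') = card S"
      using permutes_image[OF \<sigma>] card_image[OF inj_on_subset[OF permutes_inj[OF \<sigma>]]] by auto
    show "intr_le (monomial n (raise_on (\<sigma> ` S') c \<mu> \<circ> \<sigma>) x) (sym_monomial n (raise_on S c \<mu>) x)"
      using monomial_raise_le_sym_monomial[OF idem frob S dom img \<sigma>] .
  qed
  moreover have "intr_le (sym_monomial n (raise_on S c \<mu>) x) ?terms"
    unfolding sym_monomial_def P_def[symmetric]
  proof (rule idem_sum_le[OF idem fin(2)])
    fix \<rho> assume "\<rho> \<in> P"
    then have \<rho>: "\<rho> permutes {..<n}" by (simp add: P_def)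
    have "inv \<rho> ` S \<in> Sets"
      using S permutes_in_image[OF permutes_inv[OF \<rho>]] permutes_inj[OF permutes_inv[OF \<rho>]]
      by (auto simp: Sets_def card_image inj_on_subset)
    have "monomial n (raise_on S c \<mu> \<circ> \<rho>) x = monomial n (raise_on (\<rho> ` inv \<rho> ` S) c \<mu> \<circ> \<rho>) x"
      using \<rho> by (simp add: image_f_inv_f permutes_surj)
    also have "intr_le \<dots> (\<Sum>\<sigma>\<in>P. monomial n (raise_on (\<sigma> ` inv \<rho> ` S) c \<mu> \<circ> \<sigma>) x)"
      by (rule intr_le_sum_mem[OF fin(2) \<open>\<rho> \<in> P\<close>])
    also have "intr_le \<dots> ?terms"
      by (rule intr_le_sum_mem[OF fin(1) \<open>inv \<rho> ` S \<in> Sets\<close>])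
    finally show "intr_le (monomial n (raise_on S c \<mu> \<circ> \<rho>) x) ?terms" .
  qed
  ultimately show ?thesis using idem_intr_le_antisym[OF idem] by metis
qed

section \<open>Polynomials in the elementary symmetric polynomials\<close>

definition elementary_expressible ::
    "nat \<Rightarrow> ((nat \<Rightarrow> 'a::{comm_semiring_0,comm_monoid_mult}) \<Rightarrow> 'a) \<Rightarrow> bool" where
  "elementary_expressible n f \<longleftrightarrow> (\<exists>rs. \<forall>x. f x = poly_eval n rs (\<lambda>j. elem_sym n (Suc j) x))"

lemma elementary_expressible_0: "elementary_expressible n (\<lambda>x. 0)"
  unfolding elementary_expressible_def by (rule exI[of _ "[]"]) simp

lemma elementary_expressible_1: "elementary_expressible n (\<lambda>x. 1)"
  unfolding elementary_expressible_def by (rule exI[of _ "[(1, \<lambda>_. 0)]"]) (simp add: monomial_def)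

lemma elementary_expressible_add:
  assumes "elementary_expressible n f" "elementary_expressible n g"
  shows "elementary_expressible n (\<lambda>x. f x + g x)"
  using assms unfolding elementary_expressible_def by (metis poly_eval_append)

lemma elementary_expressible_cmult:
  assumes "elementary_expressible n f"
  shows "elementary_expressible n (\<lambda>x. a * f x)"
proof -
  obtain rs where rs: "\<And>x. f x = poly_eval n rs (\<lambda>j. elem_sym n (Suc j) x)"
    using assms unfolding elementary_expressible_def by blast
  have "poly_eval n (map (\<lambda>(b, d). (a * b, d)) rs) y = a * poly_eval n rs y" for y
    by (induction rs) (auto simp: distrib_left mult.assoc)
  then show ?thesis
    unfolding elementary_expressible_def rs by (intro exI[of _ "map (\<lambda>(b, d). (a * b, d)) rs"]) simp
qed

lemma elementary_expressible_elem_sym_pow_mult: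
  assumes "elementary_expressible n f" "1 \<le> k" "k \<le> n"
  shows "elementary_expressible n (\<lambda>x. elem_sym n k x ^ c * f x)"
proof -
  obtain rs where rs: "\<And>x. f x = poly_eval n rs (\<lambda>j. elem_sym n (Suc j) x)"
    using assms unfolding elementary_expressible_def by blast
  obtain i where k: "k = Suc i" and i: "{i} \<subseteq> {..<n}" using assms(2,3) by (cases k) auto
  have raise: "monomial n (raise_on {i} c d) y = y i ^ c * monomial n d y" for y d
    using prod_pow_mult_monomial[OF i, of y c d] by simp
  have "poly_eval n (map (\<lambda>(b, d). (b, raise_on {i} c d)) rs) y = y i ^ c * poly_eval n rs y" for y
    by (induction rs) (auto simp: raise distrib_left mult.left_commute)
  then show ?thesis
    unfolding elementary_expressible_def rs k
    by (intro exI[of _ "map (\<lambda>(b, d). (b, raise_on {i} c d)) rs"]) simp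
qed

lemma sym_monomial_eq_1:
  assumes "sr_idempotent TYPE('a::{comm_semiring_0,comm_monoid_mult})" "\<And>j. j < n \<Longrightarrow> d j = 0"
  shows "sym_monomial n d x = (1::'a)"
proof -
  have "monomial n (d \<circ> \<sigma>) x = 1" if "\<sigma> permutes {..<n}" for \<sigma>
    using assms(2) permutes_in_image[OF that] by (auto simp: monomial_def intro!: prod.neutral)
  then show ?thesis
    unfolding sym_monomial_def by (simp add: idem_sum_permutations_const[OF assms(1)])
qed

lemma sym_monomial_elementary_expressible:
  assumes idem: "sr_idempotent TYPE('a::{comm_semiring_0,comm_monoid_mult})"
    and frob: "sr_frobenius TYPE('a)"
  shows "elementary_expressible n (sym_monomial n d :: (nat \<Rightarrow> 'a) \<Rightarrow> 'a)"
proof (induction "card {j. j < n \<and> 0 < d j}" arbitrary: d rule: less_induct)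
  case less
  define S where "S = {j. j < n \<and> 0 < d j}"
  have finS: "finite S" unfolding S_def by simp
  show ?case
  proof (cases "S = {}")
    case True
    then have "sym_monomial n d = (\<lambda>x::nat \<Rightarrow> 'a. 1)"
      by (intro ext sym_monomial_eq_1[OF idem]) (auto simp: S_def)
    then show ?thesis by (simp add: elementary_expressible_1)
  next
    case False
    define c where "c = Min (d ` S)"
    define d' where "d' j = (if j \<in> S then d j - c else d j)" for j
    have "c \<in> d ` S" unfolding c_def using finS False by simp
    then obtain j0 where j0: "j0 \<in> S" "d j0 = c" by auto
    have d: "d = raise_on S c d'"
      using finS by (auto simp: fun_eq_iff raise_on_def d'_def c_def)
    have "{j. j < n \<and> 0 < d' j} \<subseteq> S - {j0}"
      using j0 by (auto simp: d'_def S_def)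
    then have "card {j. j < n \<and> 0 < d' j} < card S"
      using finS j0(1) card_mono[of "S - {j0}"] card_Diff1_less[of S j0] by (meson finite_Diff le_less_trans)
    then have IH: "elementary_expressible n (sym_monomial n d' :: (nat \<Rightarrow> 'a) \<Rightarrow> 'a)"
      using less.hyps unfolding S_def by blast
    have "S \<subseteq> {..<n}" by (auto simp: S_def)
    then have "sym_monomial n d = (\<lambda>x::nat \<Rightarrow> 'a. elem_sym n (card S) x ^ c * sym_monomial n d' x)"
      unfolding d by (intro ext sym_monomial_raise[OF idem frob]) (auto simp: d'_def S_def)
    moreover have "1 \<le> card S" "card S \<le> n"
      using False finS card_mono[of "{..<n}" S] \<open>S \<subseteq> {..<n}\<close> by (auto simp: Suc_le_eq card_gt_0_iff)
    ultimately show ?thesis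
      by (simp add: elementary_expressible_elem_sym_pow_mult[OF IH])
  qed
qed

lemma sum_list_permuted_monomials:
  assumes "symmetric_expr n ps" "\<sigma> permutes {..<n}"
  shows "(\<Sum>(a, d) \<leftarrow> ps. a * monomial n (d \<circ> \<sigma>) y) = poly_eval n ps y"
proof -
  define g where "g = (\<lambda>(a, d). a * monomial n d y)"
  have "(\<Sum>(a, d) \<leftarrow> ps. a * monomial n (d \<circ> \<sigma>) y) = sum_list (map g (map (\<lambda>(a, d). (a, d \<circ> \<sigma>)) ps))"
    by (simp add: g_def case_prod_unfold comp_def)
  also have "\<dots> = sum_mset (image_mset g (mset (map (\<lambda>(a, d). (a, d \<circ> \<sigma>)) ps)))"
    by (simp only: mset_map[symmetric] sum_mset_sum_list)
  also have "\<dots> = sum_mset (image_mset g (mset ps))"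
    using assms unfolding symmetric_expr_def by simp
  also have "\<dots> = poly_eval n ps y"
    by (simp only: mset_map[symmetric] sum_mset_sum_list g_def poly_eval_monomial)
  finally show ?thesis .
qed

lemma poly_eval_symmetric:
  assumes idem: "sr_idempotent TYPE('a::{comm_semiring_0,comm_monoid_mult})"
    and "symmetric_expr n ps"
  shows "poly_eval n ps (y::nat \<Rightarrow> 'a) = (\<Sum>(a, d) \<leftarrow> ps. a * sym_monomial n d y)"
proof -
  let ?P = "{\<sigma>. \<sigma> permutes {..<n}}"
  have "(\<Sum>(a, d) \<leftarrow> ps. a * sym_monomial n d y) = (\<Sum>\<sigma>\<in>?P. \<Sum>(a, d) \<leftarrow> ps. a * monomial n (d \<circ> \<sigma>) y)"
    unfolding sym_monomial_def sum_distrib_left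
    by (induction ps) (auto simp: sum.distrib)
  also have "\<dots> = (\<Sum>\<sigma>\<in>?P. poly_eval n ps y)"
    using sum_list_permuted_monomials[OF assms(2)] by simp
  also have "\<dots> = poly_eval n ps y"
    by (simp add: idem_sum_permutations_const[OF idem])
  finally show ?thesis by simp
qed

lemma idempotent_frobenius_fully_elementary:
  assumes "sr_idempotent TYPE('a::{comm_semiring_0,comm_monoid_mult})" "sr_frobenius TYPE('a)"
  shows "fully_elementary TYPE('a)"
  unfolding fully_elementary_def n_elementary_def
proof (intro allI impI)
  fix n and ps :: "'a poly_expr" assume "symmetric_expr n ps"
  moreover have "elementary_expressible n (\<lambda>y::nat \<Rightarrow> 'a. \<Sum>(a, d) \<leftarrow> ps. a * sym_monomial n d y)"
    by (induction ps)
       (auto intro!: elementary_expressible_add elementary_expressible_cmult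
          sym_monomial_elementary_expressible[OF assms] simp: elementary_expressible_0)
  ultimately show "\<exists>rs. \<forall>x. poly_eval n ps x = poly_eval n rs (\<lambda>j. elem_sym n (Suc j) x)"
    unfolding elementary_expressible_def by (simp add: poly_eval_symmetric[OF assms(1)])
qed

section \<open>Full elementarity forces the Frobenius law\<close>

lemma monomial_upd_zero_intr_le:
  "intr_le (monomial n d (u(k := 0))) (monomial n d (u::nat \<Rightarrow> 'a::{comm_semiring_0,comm_monoid_mult}))"
proof (cases "k < n \<and> d k > 0")
  case True
  have "monomial n d (u(k := 0)) = (u(k := 0)) k ^ d k * (\<Prod>j\<in>{..<n} - {k}. (u(k := 0)) j ^ d j)"
    unfolding monomial_def by (rule prod.remove) (use True in auto)
  also have "\<dots> = 0" using True by (cases "d k") simp_all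
  finally show ?thesis by (simp add: intr_le_0)
next
  case False
  then have "monomial n d (u(k := 0)) = monomial n d u"
    unfolding monomial_def by (intro prod.cong) auto
  then show ?thesis by (simp add: intr_le_refl)
qed

lemma poly_eval_upd_zero_intr_le: "intr_le (poly_eval n rs (u(k := 0))) (poly_eval n rs u)"
proof (induction rs)
  case Nil then show ?case by (simp add: intr_le_refl)
next
  case (Cons p rs)
  obtain a d where p: "p = (a, d)" by fastforce
  show ?case
    unfolding p poly_eval_Cons
    by (rule intr_le_add_mono[OF intr_le_mult_left[OF monomial_upd_zero_intr_le] Cons.IH])
qed

lemma poly_eval_cong: "(\<And>j. j < n \<Longrightarrow> u j = v j) \<Longrightarrow> poly_eval n rs u = poly_eval n rs v"
  unfolding poly_eval_def by (intro arg_cong[where f = sum_list] map_cong refl) (auto intro!: prod.cong)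

lemma monomial_two: "monomial 2 d v = v 0 ^ d 0 * v 1 ^ d 1"
  by (simp add: monomial_def numeral_2_eq_2 lessThan_Suc mult_ac)

lemma subsets_lessThan_two: "S \<subseteq> {..<2::nat} \<longleftrightarrow> S = {} \<or> S = {0} \<or> S = {1} \<or> S = {0, 1}"
proof
  assume "S \<subseteq> {..<2::nat}"
  then have "S \<subseteq> {0, 1}" by auto
  then show "S = {} \<or> S = {0} \<or> S = {1} \<or> S = {0, 1}" by blast
qed auto

lemma elem_sym_two:
  "elem_sym 2 (Suc 0) x = x 0 + x 1" "elem_sym 2 (Suc (Suc 0)) x = x 0 * x 1"
proof -
  have "{S. S \<subseteq> {..<2::nat} \<and> card S = Suc 0} = {{0}, {1}}"
       "{S. S \<subseteq> {..<2::nat} \<and> card S = Suc (Suc 0)} = {{0, 1}}"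
    unfolding subsets_lessThan_two by auto
  then show "elem_sym 2 (Suc 0) x = x 0 + x 1" "elem_sym 2 (Suc (Suc 0)) x = x 0 * x 1"
    unfolding elem_sym_def by simp_all
qed

definition power_sum_two :: "nat \<Rightarrow> 'a::{comm_semiring_0,comm_monoid_mult} poly_expr" where
  "power_sum_two N = [(1, \<lambda>j. if j = 0 then N else 0), (1, \<lambda>j. if j = 1 then N else 0)]"

lemma poly_eval_power_sum_two: "poly_eval 2 (power_sum_two N) v = v 0 ^ N + v 1 ^ N"
  by (simp add: power_sum_two_def monomial_two)

lemma symmetric_power_sum_two:
  "symmetric_expr 2 (power_sum_two N :: 'a::{comm_semiring_0,comm_monoid_mult} poly_expr)"
  unfolding symmetric_expr_def
proof (intro allI impI)
  fix \<sigma> assume \<sigma>: "\<sigma> permutes {..<2::nat}"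
  define D where "D i j = (if j = i then N else 0)" for i j :: nat
  have ps: "(power_sum_two N :: 'a poly_expr) = [(1, D 0), (1, D 1)]"
    by (simp add: power_sum_two_def D_def fun_eq_iff)
  have "D i \<circ> \<sigma> = D (inv \<sigma> i)" for i
    using permutes_inv_eq[OF \<sigma>] unfolding D_def comp_def by (metis fun_eq_iff)
  moreover have "inv \<sigma> 0 < 2" "inv \<sigma> 1 < 2" "inv \<sigma> 0 \<noteq> inv \<sigma> 1"
    using permutes_in_image[OF permutes_inv[OF \<sigma>]] permutes_inj[OF permutes_inv[OF \<sigma>]]
    by (auto dest: injD)
  then have "(inv \<sigma> 0 = 0 \<and> inv \<sigma> 1 = 1) \<or> (inv \<sigma> 0 = 1 \<and> inv \<sigma> 1 = 0)" by linarith
  ultimately show "mset (map (\<lambda>(a, d). (a, d \<circ> \<sigma>)) (power_sum_two N :: 'a poly_expr))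
      = mset (power_sum_two N)"
    unfolding ps by auto
qed

lemma frobenius_if_two_elementary_upper_bound:
  assumes fe: "n_elementary TYPE('a::{comm_semiring_0,comm_monoid_mult}) 2"
    and ub: "sr_upper_bound TYPE('a)"
  shows "sr_frobenius TYPE('a)"
  unfolding sr_frobenius_def
proof (intro allI impI)
  fix x y :: 'a and N :: nat assume N: "N \<ge> 1"
  have "symmetric_expr 2 (power_sum_two N :: 'a poly_expr)" by (rule symmetric_power_sum_two)
  then obtain rs where
    rs: "\<And>v::nat \<Rightarrow> 'a. poly_eval 2 (power_sum_two N) v = poly_eval 2 rs (\<lambda>j. elem_sym 2 (Suc j) v)"
    using fe unfolding n_elementary_def by blast
  define v where "v j = (if j = 0 then x else y)" for j :: nat
  define w where "w j = (if j = 0 then x + y else 0)" for j :: nat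
  have "(0::'a) ^ N = 0" using N by (cases N) auto
  then have "(x + y) ^ N = poly_eval 2 rs (\<lambda>j. elem_sym 2 (Suc j) w)"
    by (simp flip: rs add: poly_eval_power_sum_two w_def)
  also have "\<dots> = poly_eval 2 rs ((\<lambda>j. elem_sym 2 (Suc j) v)(1 := 0))"
    by (rule poly_eval_cong) (auto simp: less_2_cases_iff elem_sym_two v_def w_def)
  finally have "intr_le ((x + y) ^ N) (x ^ N + y ^ N)"
    using poly_eval_upd_zero_intr_le rs[of v] by (simp add: poly_eval_power_sum_two v_def)
  then show "(x + y) ^ N = x ^ N + y ^ N"
    using ub pow_add_intr_le_pow[OF N] unfolding sr_upper_bound_def by blast
qed

lemma idempotent_if_frobenius_two_cancellative:
  assumes "sr_frobenius TYPE('a::{comm_semiring_0,comm_monoid_mult})" "sr_two_cancellative TYPE('a)"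
  shows "sr_idempotent TYPE('a)"
proof -
  have "((1::'a) + 1) ^ 2 = 1 + 1" using sr_frobeniusD[OF assms(1), of 2] by simp
  then have "(1 + 1) + (1 + 1) = (1::'a) + 1" by (simp add: power2_eq_square distrib_left)
  then have "(1::'a) + 1 = 1" using assms(2) unfolding sr_two_cancellative_def by blast
  then show ?thesis unfolding sr_idempotent_def by (metis distrib_left mult.right_neutral)
qed

theorem theorem4p6:
  fixes T :: "'a::{comm_semiring_0, comm_monoid_mult} itself"
  shows "(fully_elementary T \<and> sr_upper_bound T \<and> sr_two_cancellative T)
     \<longleftrightarrow> (sr_frobenius T \<and> sr_idempotent T)"
proof -
  have "fully_elementary T = fully_elementary TYPE('a)"
      "sr_upper_bound T = sr_upper_bound TYPE('a)" "sr_two_cancellative T = sr_two_cancellative TYPE('a)"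
      "sr_frobenius T = sr_frobenius TYPE('a)" "sr_idempotent T = sr_idempotent TYPE('a)"
    by (simp_all add: fully_elementary_def n_elementary_def sr_upper_bound_def
        sr_two_cancellative_def sr_frobenius_def sr_idempotent_def)
  moreover have "fully_elementary TYPE('a) \<Longrightarrow> n_elementary TYPE('a) 2"
    by (simp add: fully_elementary_def)
  ultimately show ?thesis
    using frobenius_if_two_elementary_upper_bound[where 'a = 'a]
      idempotent_if_frobenius_two_cancellative[where 'a = 'a]
      idempotent_frobenius_fully_elementary[where 'a = 'a]
      idempotent_upper_bound[where 'a = 'a] idempotent_two_cancellative[where 'a = 'a]
    by metis
qed

end
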